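(* Fix $i\in\{1,\ldots,N\}$, a DFA mode $q$ and an atomic-proposition formula $\alpha^i$. Suppose $\hat{\mathbf{M}}^i\preceq^{\delta^i}_0\mathbf{M}^i$ with relation $\mathscr{R}^i$, interface $\mathcal U_i$ and lifted kernel $\mathbb{W}_{\mathbb{T}^i}$, and let $\pi^i_q:\hat{\mathbb{X}}_i\to\hat{\mathbb{U}}_i$ be given. Let $v^{(i)}(\cdot,\cdot,q):\hat{\mathbb{X}}_i\times\mathbb{X}_i\to[0,1]$ and $v^{(i)}(\cdot,q):\hat{\mathbb{X}}_i\to[0,1]$ satisfy $v^{(i)}(\hat x_i,x_i,q)\ge v^{(i)}(\hat x_i,q)$ for all $(\hat x_i,x_i)\in\mathscr{R}^i$. Then for all $(\hat x_i,x_i)\in\mathscr{R}^i$, $$\mathbf{T}^{\pi^i_q}_{\alpha^i}(v^{(i)})(\hat x_i,x_i,q)\;\ge\;\mathbf{T}^{\pi^i_q}_{\delta^i,\alpha^i}(v^{(i)})(\hat x_i,q).$$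
   Context: Agent $\mathbf{M}^i=(\mathbb{X}_i,\mathbb{U}_i,\mathbb{Y}_i,\mathbb{T}_i,x_{i,0},h_i)$ and its abstraction $\hat{\mathbf{M}}^i=(\hat{\mathbb{X}}_i,\hat{\mathbb{U}}_i,\hat{\mathbb{Y}}_i,\hat{\mathbb{T}}_i,\hat x_{i,0},\hat h_i)$ are general Markov decision processes: Polish state and input spaces, a metric output space, a stochastic kernel $\mathbb{T}(\cdot\mid x,u)$, an initial state and a measurable output map. $\hat{\mathbf{M}}^i\preceq^{\delta}_{\epsilon}\mathbf{M}^i$ means that there exist: - a measurable relation $\mathscr{R}^i\subset\hat{\mathbb{X}}_i\times\mathbb{X}_i$; - an interface $\mathcal U_i:\hat{\mathbb{U}}_i\times\hat{\mathbb{X}}_i\times\mathbb{X}_i\to\mathcal{P}(\mathbb{U}_i)$; - a kernel $\mathbb{W}_{\mathbb{T}^i}(\cdot\mid\hat u,\hat x,x)$ on $\hat{\mathbb{X}}_i\times\mathbb{X}_i$; such that: - $(\hat x_{i,0},x_{i,0})\in\mathscr{R}^i$; - $d_{\mathbb{Y}_i}(\hat h_i(\hat x),h_i(x))\le\epsilon$ on $\mathscr{R}^i$; - for every $\hat u$ and every $(\hat x,x)\in\mathscr{R}^i$, $\mathbb{W}_{\mathbb{T}^i}(\cdot\mid\hat u,\hat x,x)$ has first marginal $\hat{\mathbb{T}}_i(\cdot\mid\hat x,\hat u)$, has second marginal $\mathbb{T}_i(\cdot\mid x,\mathcal U_i(\hat u,\hat x,x))$, and satisfies $\mathbb{W}_{\mathbb{T}^i}(\mathscr{R}^i\mid\hat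 u,\hat x,x)\ge1-\delta$. $\alpha^i$ is a conjunction of (possibly negated) atomic propositions from $\mathrm{AP}_i$. With labelling map $L^i:\mathbb{Y}_i\to2^{\mathrm{AP}_i}$, the indicator $\mathcal L_{\alpha^i}(\hat x_i)$ equals $1$ if $L^i(\hat h_i(\hat x_i))\models\alpha^i$ and $0$ otherwise. Coupled operator: $$\mathbf{T}^{\pi^i_q}_{\alpha^i}(v^{(i)})(\hat x_i,x_i,q)=\int\mathcal L_{\alpha^i}(\hat x_i')\,v^{(i)}(\hat x_i',x_i',q)\,\mathbb{W}_{\mathbb{T}^i}\big(d\hat x_i'\times dx_i'\mid\pi^i_q(\hat x_i),\hat x_i,x_i\big).$$ Abstract operator: $$\mathbf{T}^{\pi^i_q}_{\alpha^i}(v^{(i)})(\hat x_i,q)=\mathbb{E}\big[\mathcal L_{\alpha^i}(\hat x_i')v^{(i)}(\hat x_i',q)\big],\qquad \hat x_i'\sim\hat{\mathbb{T}}_i(\cdot\mid\hat x_i,\pi^i_q(\hat x_i)).$$ Robust operator: $$\mathbf{T}^{\pi^i_q}_{\delta^i,\alpha^i}(v^{(i)})(\hat x_i,q)=\mathbf L\big(\mathbf{T}^{\pi^i_q}_{\alpha^i}(v^{(i)})(\hat x_i,q)-\delta^i\big),$$ where $\mathbf L(a)=\min\{1,\max\{0,a\}\}$ is truncation to $[0,1]$. *)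

theory Defs
  imports "HOL-Probability.Probability"
begin

definition trunc01 :: "real \<Rightarrow> real" where
  "trunc01 a = min 1 (max 0 a)"

text \<open>A conjunction of (possibly negated) atomic propositions is given by the set
  of positive atoms and the set of negated atoms; a label set satisfies it iff it contains
  all positive and none of the negated atoms.\<close>
definition sat_conj :: "'ap set \<Rightarrow> 'ap set \<Rightarrow> 'ap set \<Rightarrow> bool" where
  "sat_conj pos neg S \<longleftrightarrow> pos \<subseteq> S \<and> neg \<inter> S = {}"

definition label_ind :: "('y \<Rightarrow> 'ap set) \<Rightarrow> ('a \<Rightarrow> 'y) \<Rightarrow> 'ap set \<Rightarrow> 'ap set \<Rightarrow> 'a \<Rightarrow> real" where
  "label_ind L hh pos neg xh = (if sat_conj pos neg (L (hh xh)) then 1 else 0)"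

definition stoch_kernel :: "('c::topological_space \<Rightarrow> 'd::topological_space measure) \<Rightarrow> bool" where
  "stoch_kernel K \<longleftrightarrow> (\<forall>c. prob_space (K c) \<and> sets (K c) = sets borel)
      \<and> K \<in> borel \<rightarrow>\<^sub>M subprob_algebra borel"

definition gmdp :: "('x::polish_space \<Rightarrow> 'u::polish_space \<Rightarrow> 'x measure) \<Rightarrow> ('x \<Rightarrow> 'y::metric_space) \<Rightarrow> bool" where
  "gmdp T h \<longleftrightarrow> stoch_kernel (\<lambda>(x,u). T x u) \<and> h \<in> borel_measurable borel"

text \<open>Approximate probabilistic relation  Mhat  \<preceq>^delta_eps  M  witnessed by
  relation R, interface Ui and lifted kernel W.\<close>
definition sim_rel ::
  "('a::polish_space \<Rightarrow> 'u::polish_space \<Rightarrow> 'a measure) \<Rightarrow> 'a \<Rightarrow> ('a \<Rightarrow> 'y::metric_space)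
   \<Rightarrow> ('b::polish_space \<Rightarrow> 'v::polish_space \<Rightarrow> 'b measure) \<Rightarrow> 'b \<Rightarrow> ('b \<Rightarrow> 'y)
   \<Rightarrow> real \<Rightarrow> real
   \<Rightarrow> ('a \<times> 'b) set \<Rightarrow> ('u \<Rightarrow> 'a \<Rightarrow> 'b \<Rightarrow> 'v measure) \<Rightarrow> ('u \<Rightarrow> 'a \<Rightarrow> 'b \<Rightarrow> ('a \<times> 'b) measure)
   \<Rightarrow> bool" where
  "sim_rel That xh0 hh T x0 h eps delta R Ui W \<longleftrightarrow>
     gmdp That hh \<and> gmdp T h \<and>
     R \<in> sets (borel \<Otimes>\<^sub>M borel) \<and>
     stoch_kernel (\<lambda>(uh, xh, x). Ui uh xh x) \<and>
     stoch_kernel (\<lambda>(uh, xh, x). W uh xh x) \<and>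
     (xh0, x0) \<in> R \<and>
     (\<forall>(xh, x) \<in> R. dist (hh xh) (h x) \<le> eps) \<and>
     (\<forall>uh. \<forall>(xh, x) \<in> R.
        distr (W uh xh x) borel fst = That xh uh \<and>
        distr (W uh xh x) borel snd = (Ui uh xh x \<bind> (\<lambda>u. T x u)) \<and>
        measure (W uh xh x) R \<ge> 1 - delta)"

definition T_coupled ::
  "('u \<Rightarrow> 'a \<Rightarrow> 'b \<Rightarrow> ('a \<times> 'b) measure) \<Rightarrow> ('a \<Rightarrow> real) \<Rightarrow> ('q \<Rightarrow> 'a \<Rightarrow> 'u)
   \<Rightarrow> ('a \<Rightarrow> 'b \<Rightarrow> 'q \<Rightarrow> real) \<Rightarrow> 'a \<Rightarrow> 'b \<Rightarrow> 'q \<Rightarrow> real" where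
  "T_coupled W La pol v xh x q =
     (\<integral>p. La (fst p) * v (fst p) (snd p) q \<partial>(W (pol q xh) xh x))"

definition T_abs ::
  "('a \<Rightarrow> 'u \<Rightarrow> 'a measure) \<Rightarrow> ('a \<Rightarrow> real) \<Rightarrow> ('q \<Rightarrow> 'a \<Rightarrow> 'u)
   \<Rightarrow> ('a \<Rightarrow> 'q \<Rightarrow> real) \<Rightarrow> 'a \<Rightarrow> 'q \<Rightarrow> real" where
  "T_abs That La pol v xh q = (\<integral>xh'. La xh' * v xh' q \<partial>(That xh (pol q xh)))"

definition T_robust ::
  "('a \<Rightarrow> 'u \<Rightarrow> 'a measure) \<Rightarrow> real \<Rightarrow> ('a \<Rightarrow> real) \<Rightarrow> ('q \<Rightarrow> 'a \<Rightarrow> 'u)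
   \<Rightarrow> ('a \<Rightarrow> 'q \<Rightarrow> real) \<Rightarrow> 'a \<Rightarrow> 'q \<Rightarrow> real" where
  "T_robust That delta La pol v xh q = trunc01 (T_abs That La pol v xh q - delta)"

end

theory Submission
  imports Defs
begin

text \<open>Under the lifted kernel the pair of successor states stays in \<open>R\<close> with probability
  at least \<open>1 - \<delta>\<close>, and on \<open>R\<close> the coupled integrand dominates the abstract one, since the
  label indicator only depends on the abstract state. Outside \<open>R\<close> the abstract integrand
  is at most 1, so the abstract expectation exceeds the coupled one by at most \<open>\<delta>\<close>.\<close>

lemma trunc01_le:
  assumes "a \<le> b" and "0 \<le> b"
  shows "trunc01 a \<le> b"
  using assms unfolding trunc01_def by linarith

lemma label_ind_nonneg: "0 \<le> label_ind L hh pos neg xh"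
  and label_ind_le_1: "label_ind L hh pos neg xh \<le> 1"
  unfolding label_ind_def by auto

lemma label_ind_borel_measurable:
  assumes "hh \<in> borel_measurable borel" and "{y. sat_conj pos neg (L y)} \<in> sets borel"
  shows "label_ind L hh pos neg \<in> borel_measurable borel"
proof -
  have "label_ind L hh pos neg = indicator (hh -` {y. sat_conj pos neg (L y)})"
    unfolding label_ind_def by (auto simp: indicator_def fun_eq_iff)
  moreover have "hh -` {y. sat_conj pos neg (L y)} \<in> sets borel"
    using measurable_sets[OF assms] by simp
  ultimately show ?thesis by simp
qed

lemma stoch_kernel_prob_space:
  assumes "stoch_kernel K"
  shows "prob_space (K c)" and "sets (K c) = sets borel"
  using assms unfolding stoch_kernel_def by auto

lemma sim_rel_lifted_kernel:
  assumes "sim_rel That xh0 hh T x0 h eps delta R Ui W" and "(xh, x) \<in> R"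
  shows "prob_space (W uh xh x)"
    and "sets (W uh xh x) = sets (borel \<Otimes>\<^sub>M borel)"
    and "R \<in> sets (W uh xh x)"
    and "distr (W uh xh x) borel fst = That xh uh"
    and "measure (W uh xh x) R \<ge> 1 - delta"
proof -
  have W: "stoch_kernel (\<lambda>(uh, xh, x). W uh xh x)" and R: "R \<in> sets (borel \<Otimes>\<^sub>M borel)"
    and coupling: "\<forall>uh. \<forall>(xh, x) \<in> R. distr (W uh xh x) borel fst = That xh uh
        \<and> distr (W uh xh x) borel snd = (Ui uh xh x \<bind> (\<lambda>u. T x u))
        \<and> measure (W uh xh x) R \<ge> 1 - delta"
    using assms(1) unfolding sim_rel_def by blast+
  show "prob_space (W uh xh x)"
    using stoch_kernel_prob_space(1)[OF W, of "(uh, xh, x)"] by simp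
  show sets: "sets (W uh xh x) = sets (borel \<Otimes>\<^sub>M borel)"
    unfolding borel_prod using stoch_kernel_prob_space(2)[OF W, of "(uh, xh, x)"] by simp
  show "R \<in> sets (W uh xh x)"
    using R sets by simp
  show "distr (W uh xh x) borel fst = That xh uh" "measure (W uh xh x) R \<ge> 1 - delta"
    using coupling assms(2) by auto
qed

lemma sim_rel_abs_output_measurable:
  assumes "sim_rel That xh0 hh T x0 h eps delta R Ui W"
  shows "hh \<in> borel_measurable borel"
  using assms unfolding sim_rel_def gmdp_def by auto

lemma (in prob_space) integral_le_integral_plus_prob_compl:
  assumes "R \<in> events" and f: "integrable M f" and g: "integrable M g"
    and "\<And>p. p \<in> space M \<Longrightarrow> 0 \<le> f p" and "\<And>p. p \<in> space M \<Longrightarrow> g p \<le> 1"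
    and "\<And>p. p \<in> R \<Longrightarrow> g p \<le> f p"
  shows "integral\<^sup>L M g \<le> integral\<^sup>L M f + prob (space M - R)"
proof -
  have compl: "integrable M (indicator (space M - R) :: _ \<Rightarrow> real)"
    using assms(1) by (intro integrable_const_bound[where B=1]) auto
  have "integral\<^sup>L M (\<lambda>p. g p - indicator (space M - R) p) \<le> integral\<^sup>L M f"
  proof (intro integral_mono Bochner_Integration.integrable_diff f g compl)
    fix p assume "p \<in> space M"
    then show "g p - indicator (space M - R) p \<le> f p"
      using assms(4-6)[of p] by (cases "p \<in> R") auto
  qed
  moreover have "integral\<^sup>L M (\<lambda>p. g p - indicator (space M - R) p)
      = integral\<^sup>L M g - prob (space M - R)"
    using g compl assms(1) by (simp add: Bochner_Integration.integral_diff)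
  ultimately show ?thesis by simp
qed

theorem lemma1:
  fixes That :: "'a::polish_space \<Rightarrow> 'u::polish_space \<Rightarrow> 'a measure"
    and T :: "'b::polish_space \<Rightarrow> 'v::polish_space \<Rightarrow> 'b measure"
    and hh :: "'a \<Rightarrow> 'y::metric_space" and h :: "'b \<Rightarrow> 'y"
    and xh0 :: 'a and x0 :: 'b
    and R :: "('a \<times> 'b) set"
    and Ui :: "'u \<Rightarrow> 'a \<Rightarrow> 'b \<Rightarrow> 'v measure"
    and W :: "'u \<Rightarrow> 'a \<Rightarrow> 'b \<Rightarrow> ('a \<times> 'b) measure"
    and delta :: real
    and L :: "'y \<Rightarrow> 'ap set" and pos neg :: "'ap set"
    and pol :: "'q \<Rightarrow> 'a \<Rightarrow> 'u" and q :: 'q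
    and v3 :: "'a \<Rightarrow> 'b \<Rightarrow> 'q \<Rightarrow> real" and v2 :: "'a \<Rightarrow> 'q \<Rightarrow> real"
  assumes sim: "sim_rel That xh0 hh T x0 h 0 delta R Ui W"
    and L_meas: "{y. sat_conj pos neg (L y)} \<in> sets borel"
    and pi_meas: "pol q \<in> borel_measurable borel"
    and v3_range: "\<And>xh x. 0 \<le> v3 xh x q \<and> v3 xh x q \<le> 1"
    and v3_meas: "(\<lambda>p. v3 (fst p) (snd p) q) \<in> borel_measurable (borel \<Otimes>\<^sub>M borel)"
    and v2_range: "\<And>xh. 0 \<le> v2 xh q \<and> v2 xh q \<le> 1"
    and v2_meas: "(\<lambda>xh. v2 xh q) \<in> borel_measurable borel"
    and dom: "\<And>xh x. (xh, x) \<in> R \<Longrightarrow> v3 xh x q \<ge> v2 xh q"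
  shows "\<forall>(xh, x) \<in> R.
           T_coupled W (label_ind L hh pos neg) pol v3 xh x q
             \<ge> T_robust That delta (label_ind L hh pos neg) pol v2 xh q"
proof (intro ballI, clarify)
  fix xh x assume xR: "(xh, x) \<in> R"
  define La where "La = label_ind L hh pos neg"
  define M where "M = W (pol q xh) xh x"
  define f where "f = (\<lambda>p. La (fst p) * v3 (fst p) (snd p) q)"
  define g where "g = (\<lambda>p :: 'a \<times> 'b. La (fst p) * v2 (fst p) q)"
  note coupling = sim_rel_lifted_kernel[OF sim xR, of "pol q xh", folded M_def]
  interpret prob_space M by (rule coupling(1))
  have La: "La \<in> borel_measurable borel" "\<And>z. 0 \<le> La z" "\<And>z. La z \<le> 1"
    unfolding La_def
    by (simp_all add: label_ind_borel_measurable[OF sim_rel_abs_output_measurable[OF sim] L_meas]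
        label_ind_nonneg label_ind_le_1)
  have f_meas: "f \<in> borel_measurable M" and g_meas: "g \<in> borel_measurable M"
    unfolding f_def g_def measurable_cong_sets[OF coupling(2) refl]
    using La(1) v3_meas v2_meas by measurable
  have f_bounds: "0 \<le> f p" "f p \<le> 1" and g_bounds: "0 \<le> g p" "g p \<le> 1" for p
    using La(2,3) v3_range v2_range by (simp_all add: f_def g_def mult_le_one)
  have f_int: "integrable M f" and g_int: "integrable M g"
    using f_meas g_meas f_bounds g_bounds by (auto intro!: integrable_const_bound[where B=1])
  have "T_abs That La pol v2 xh q = integral\<^sup>L (distr M borel fst) (\<lambda>z. La z * v2 z q)"
    unfolding T_abs_def coupling(4) ..
  also have "\<dots> = integral\<^sup>L M g"
    unfolding g_def using La(1) v2_meas measurable_cong_sets[OF coupling(2) refl]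
    by (subst integral_distr) auto
  also have "\<dots> \<le> integral\<^sup>L M f + prob (space M - R)"
    using coupling(3) f_int g_int f_bounds g_bounds La(2) dom
    by (intro integral_le_integral_plus_prob_compl) (auto simp: f_def g_def intro: mult_left_mono)
  also have "prob (space M - R) \<le> delta"
    using prob_compl[OF coupling(3)] coupling(5) by simp
  finally have "T_abs That La pol v2 xh q - delta \<le> integral\<^sup>L M f" by simp
  moreover have "0 \<le> integral\<^sup>L M f"
    using f_bounds by (simp add: integral_nonneg)
  ultimately show "T_robust That delta La pol v2 xh q \<le> T_coupled W La pol v3 xh x q"
    unfolding T_robust_def T_coupled_def M_def[symmetric] f_def[symmetric]
    by (rule trunc01_le)
qed

end
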